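(* Let $A$ be an $\mathcal E$-algebra. For $\alpha, \beta \in A$ and $i \geq 0$ we have \begin{equation*} (23) F (\tilde{x}_i) (\alpha \otimes \alpha \otimes \beta \otimes \beta ) = (\alpha \cup_0 \beta) \cup_i (\alpha \cup_0 \beta) \end{equation*} and \begin{equation*} G(\tilde{x}_i) (\alpha \otimes \alpha \otimes \beta \otimes \beta) = \sum_{i=j+k} (\alpha \cup_j \alpha) \cup_0 (\beta \cup_k \beta). \end{equation*}
   Context: All constructions are over $\mathbb F_2$. $\mathcal E$ denotes the Barratt-Eccles operad: $\mathcal E(r) = N_*(E(r))$, the normalized chains of the simplicial set $E(r)$ whose $n$-simplices are tuples $(\sigma_0,\dots,\sigma_n)$ of permutations in $\Sigma_r$ (faces delete, degeneracies repeat an entry), with $\Sigma_r$ acting by left multiplication on each entry, and operadic composition $\circ_{\mathcal E} = N_*(\circ_E)\circ EZ^r$, where $\circ_E$ applies composition of permutations coordinatewise and $EZ$ is the Eilenberg-Zilber map. An $\mathcal E$-algebra $A$ is an operad morphism $\mathcal E \to \mathrm{End}(A)$; elements of $\mathcal E$ are identified with their images. Let $\tilde{x}_i = (e, (12), e, \dots, (12)^i) \in \mathcal E(2)_i$. The cup-$i$ product on $A$ is $\alpha \cup_i \beta := \tilde{x}_i(\alpha \otimes \beta)$. The chain maps $F, G : \mathcal E(2) \to \mathcal E(4)$ are defined on basis elements by $F(\sigma_0,\dots,\sigma_n) = \circ_{\mathcal E}\big((\sigma_0,\dots,\sigma_n) \otimes \tilde{x}_0 \otimes \tilde{x}_0\big)$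 and $G(\sigma_0,\dots,\sigma_n) = \circ_{\mathcal E}\big(\tilde{x}_0 \otimes AW(\sigma_0,\dots,\sigma_n)^{\otimes 2}\big)$, where $AW : N_*(E(2)\times E(2)) \to N_*(E(2))\otimes N_*(E(2))$ is the Alexander-Whitney map applied to the diagonal simplex $(\sigma_0,\dots,\sigma_n)\times(\sigma_0,\dots,\sigma_n)$ (so $AW(\tilde x_i\otimes\tilde x_i)=\sum_{j=0}^i \tilde x_j\otimes (12)^j\tilde x_{i-j}$). $(23) \in \Sigma_4$ acts on $\mathcal E(4)$. *)

theory Defs
  imports Main "HOL-Library.Multiset"
begin

text \<open>A permutation of Sigma_r is encoded in one-line notation as a list
  [sigma(0), ..., sigma(r-1)] of the numbers 0..r-1 (0-based).
  An n-simplex of E(r) is a list [sigma_0, ..., sigma_n] of permutations.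
  A chain of N_*(E(r)) over F_2 is a finite set of nondegenerate simplices
  (addition is symmetric difference; degenerate simplices are zero).\<close>

type_synonym perm = "nat list"
type_synonym simplex = "perm list"
type_synonym chain = "simplex set"

definition is_perm :: "nat \<Rightarrow> perm \<Rightarrow> bool" where
  "is_perm r \<sigma> \<longleftrightarrow> distinct \<sigma> \<and> set \<sigma> = {..<r}"

definition pmult :: "perm \<Rightarrow> perm \<Rightarrow> perm" where
  "pmult \<sigma> \<rho> = map (\<lambda>p. \<sigma> ! p) \<rho>"

definition simplex_of :: "nat \<Rightarrow> simplex \<Rightarrow> bool" where
  "simplex_of r s \<longleftrightarrow> s \<noteq> [] \<and> (\<forall>\<sigma>\<in>set s. is_perm r \<sigma>)"

definition sdim :: "simplex \<Rightarrow> nat" where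
  "sdim s = length s - 1"

definition arity :: "simplex \<Rightarrow> nat" where
  "arity s = length (hd s)"

definition nondeg :: "simplex \<Rightarrow> bool" where
  "nondeg s \<longleftrightarrow> distinct_adj s"

text \<open>Sum over F_2 of the simplices f w (w in a finite set W), in normalized chains.\<close>
definition norm_sum :: "'w set \<Rightarrow> ('w \<Rightarrow> simplex) \<Rightarrow> chain" where
  "norm_sum W f = {s \<in> f ` W. nondeg s \<and> odd (card {w\<in>W. f w = s})}"

definition csum :: "chain list \<Rightarrow> chain" where
  "csum cs = {s \<in> \<Union>(set cs). odd (length (filter (\<lambda>c. s \<in> c) cs))}"

definition lact :: "perm \<Rightarrow> chain \<Rightarrow> chain" where
  "lact \<sigma> c = (\<lambda>s. map (pmult \<sigma>) s) ` c"

text \<open>Operad composition of the permutation operad (block permutations):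
  gamma(sigma; tau_1,...,tau_r); in one-line notation the word is the
  concatenation of the words tau_{sigma(1)},...,tau_{sigma(r)}, each shifted
  by the total size of the preceding blocks.\<close>
definition pcomp :: "perm \<Rightarrow> perm list \<Rightarrow> perm" where
  "pcomp \<sigma> \<tau>s = concat (map (\<lambda>i. map (\<lambda>x. x + sum_list (map length (take i \<tau>s))) (\<tau>s ! i)) \<sigma>)"

text \<open>Iterated Eilenberg-Zilber (shuffle) map: monotone lattice paths, encoded
  as words containing the letter i exactly ns!i times; after q steps the path
  is at the vertex whose i-th coordinate is the number of letters i among the
  first q letters.\<close>
definition shuffle_words :: "nat list \<Rightarrow> nat list set" where
  "shuffle_words ns = {w. mset w = mset (concat (map (\<lambda>i. replicate (ns ! i) i) [0..<length ns]))}"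

definition vertex_at :: "simplex list \<Rightarrow> nat list \<Rightarrow> nat \<Rightarrow> perm list" where
  "vertex_at xs w q = map (\<lambda>i. (xs ! i) ! count_list (take q w) i) [0..<length xs]"

text \<open>Operadic composition in E: (N_*(o_E) o EZ)(s (x) t_1 (x) ... (x) t_r),
  on basis elements (nondegenerate simplices; zero if an input is degenerate).\<close>
definition ecomp :: "simplex \<Rightarrow> simplex list \<Rightarrow> chain" where
  "ecomp s ts = (let xs = s # ts in
     if (\<forall>x\<in>set xs. nondeg x) then
       norm_sum (shuffle_words (map sdim xs))
         (\<lambda>w. map (\<lambda>q. let v = vertex_at xs w q in pcomp (hd v) (tl v)) [0..<length w + 1])
     else {})"

definition bd :: "simplex \<Rightarrow> chain" where
  "bd s = (if length s \<le> 1 then {} else norm_sum {..<length s} (\<lambda>j. take j s @ drop (Suc j) s))"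

definition act :: "(simplex \<Rightarrow> 'a list \<Rightarrow> 'a) \<Rightarrow> chain \<Rightarrow> 'a list \<Rightarrow> 'a::comm_monoid_add" where
  "act \<theta> c as = (\<Sum>s\<in>c. \<theta> s as)"

text \<open>An E-algebra: a (homologically) Z-graded F_2-chain complex (Agr, d) with
  an operad morphism E -> End(A), given by multilinear maps theta s : A^r -> A
  for basis simplices s of E(r), compatible with degrees, differentials,
  units, symmetric group actions and operadic composition.\<close>
definition E_algebra :: "(int \<Rightarrow> 'a::ab_group_add set) \<Rightarrow> ('a \<Rightarrow> 'a) \<Rightarrow> (simplex \<Rightarrow> 'a list \<Rightarrow> 'a) \<Rightarrow> bool" where
  "E_algebra Agr d \<theta> \<longleftrightarrow>
     (\<forall>x::'a. x + x = 0)
   \<and> (\<forall>n. 0 \<in> Agr n \<and> (\<forall>x\<in>Agr n. \<forall>y\<in>Agr n. x + y \<in> Agr n))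
   \<and> (\<forall>x. \<exists>S f. finite S \<and> (\<forall>n\<in>S. f n \<in> Agr n) \<and> x = (\<Sum>n\<in>S. f n))
   \<and> (\<forall>S f. finite S \<longrightarrow> (\<forall>n\<in>S. f n \<in> Agr n) \<longrightarrow> (\<Sum>n\<in>S. f n) = 0 \<longrightarrow> (\<forall>n\<in>S. f n = 0))
   \<and> (\<forall>x y. d (x + y) = d x + d y)
   \<and> (\<forall>x. d (d x) = 0)
   \<and> (\<forall>n. \<forall>x\<in>Agr n. d x \<in> Agr (n - 1))
   \<and> (\<forall>r s as j x y. simplex_of r s \<and> nondeg s \<and> length as = r \<and> j < r \<longrightarrow>
        \<theta> s (as[j := x + y]) = \<theta> s (as[j := x]) + \<theta> s (as[j := y]))
   \<and> (\<forall>r s as ks. simplex_of r s \<and> nondeg s \<and> length as = r \<and> length ks = r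
        \<and> (\<forall>j<r. as ! j \<in> Agr (ks ! j)) \<longrightarrow> \<theta> s as \<in> Agr (int (sdim s) + sum_list ks))
   \<and> (\<forall>r s as. simplex_of r s \<and> nondeg s \<and> length as = r \<longrightarrow>
        d (\<theta> s as) = act \<theta> (bd s) as + (\<Sum>j<r. \<theta> s (as[j := d (as ! j)])))
   \<and> (\<forall>a. \<theta> [[0]] [a] = a)
   \<and> (\<forall>r \<sigma> s as. is_perm r \<sigma> \<and> simplex_of r s \<and> nondeg s \<and> length as = r \<longrightarrow>
        \<theta> (map (pmult \<sigma>) s) as = \<theta> s (map (\<lambda>p. as ! p) \<sigma>))
   \<and> (\<forall>s ts as. simplex_of (length ts) s \<and> nondeg s
        \<and> (\<forall>t\<in>set ts. simplex_of (arity t) t \<and> nondeg t)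
        \<and> length as = sum_list (map arity ts) \<longrightarrow>
        act \<theta> (ecomp s ts) as =
          \<theta> s (map (\<lambda>i. \<theta> (ts ! i) (take (arity (ts ! i)) (drop (sum_list (map arity (take i ts))) as)))
                 [0..<length ts]))"

definition xt :: "nat \<Rightarrow> simplex" where
  "xt i = map (\<lambda>k. if even k then [0, 1] else [1, 0]) [0..<Suc i]"

definition cup :: "(simplex \<Rightarrow> 'a list \<Rightarrow> 'a) \<Rightarrow> nat \<Rightarrow> 'a \<Rightarrow> 'a \<Rightarrow> 'a" where
  "cup \<theta> i a b = \<theta> (xt i) [a, b]"

text \<open>F, G : E(2) -> E(4) on basis elements; G uses the Alexander-Whitney
  map of the diagonal simplex: sum_j (front j-face) (x) (back (n-j)-face).\<close>
definition F_map :: "simplex \<Rightarrow> chain" where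
  "F_map s = ecomp s [xt 0, xt 0]"

definition G_map :: "simplex \<Rightarrow> chain" where
  "G_map s = csum (map (\<lambda>j. ecomp (xt 0) [take (Suc j) s, drop j s]) [0..<length s])"

end

theory Submission
  imports Defs
begin

text \<open>Since x_0 is a vertex, the Eilenberg-Zilber map in F(x_i) = x_i \<circ> (x_0, x_0) has a
  single shuffle, so F(x_i) is one simplex; acting by (23) and then using operadic
  associativity of the algebra structure turns it into x_i(x_0(\<alpha>, \<beta>), x_0(\<alpha>, \<beta>)).
  In G(x_i) the Alexander-Whitney term for j is x_0 \<circ> (x_j, (12)^j x_{i-j}); by associativity
  it acts as x_0(x_j(\<alpha>, \<alpha>), (12)^j x_{i-j}(\<beta>, \<beta>)), and (12)^j acts trivially on the
  diagonal input (\<beta>, \<beta>). The sum over F_2 of the terms becomes a sum in A because A has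
  characteristic 2.\<close>

lemma sum_sym_diff_char2:
  fixes g :: "'b \<Rightarrow> 'a::ab_group_add"
  assumes char2: "\<forall>x::'a. x + x = 0" and "finite A" "finite B"
  shows "sum g ((A - B) \<union> (B - A)) = sum g A + sum g B"
proof -
  have "sum g ((A - B) \<union> (B - A)) = sum g (A - B) + sum g (B - A)"
    using assms by (intro sum.union_disjoint) auto
  moreover have "sum g A = sum g (A \<inter> B) + sum g (A - B)"
    using assms sum.Int_Diff by blast
  moreover have "sum g B = sum g (A \<inter> B) + sum g (B - A)"
    using assms sum.Int_Diff by (metis Int_commute)
  moreover have "sum g (A \<inter> B) + sum g (A \<inter> B) = 0"
    using char2 by simp
  ultimately show ?thesis by (simp add: algebra_simps)
qed

lemma mem_csum: "s \<in> csum cs \<longleftrightarrow> odd (length (filter (\<lambda>c. s \<in> c) cs))"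
proof
  assume odd: "odd (length (filter (\<lambda>c. s \<in> c) cs))"
  then have "filter (\<lambda>c. s \<in> c) cs \<noteq> []" by auto
  then have "s \<in> \<Union>(set cs)" by (auto simp: filter_empty_conv)
  with odd show "s \<in> csum cs" by (simp add: csum_def)
qed (simp add: csum_def)

lemma csum_Nil [simp]: "csum [] = {}"
  by (simp add: csum_def)

lemma csum_Cons: "csum (c # cs) = (c - csum cs) \<union> (csum cs - c)"
  by (auto simp: mem_csum split: if_splits)

lemma finite_csum: "\<forall>c\<in>set cs. finite c \<Longrightarrow> finite (csum cs)"
  unfolding csum_def by auto

lemma sum_csum:
  fixes g :: "simplex \<Rightarrow> 'a::ab_group_add"
  assumes char2: "\<forall>x::'a. x + x = 0" and "\<forall>c\<in>set cs. finite c"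
  shows "sum g (csum cs) = (\<Sum>c\<leftarrow>cs. sum g c)"
  using assms(2)
proof (induction cs)
  case (Cons c cs)
  then show ?case
    using sum_sym_diff_char2[OF char2, of c "csum cs" g] finite_csum[of cs]
    by (simp add: csum_Cons)
qed simp

lemma finite_shuffle_words: "finite (shuffle_words ns)"
proof -
  define M where "M = mset (concat (map (\<lambda>i. replicate (ns ! i) i) [0..<length ns]))"
  have "shuffle_words ns \<subseteq> {w. set w \<subseteq> set_mset M \<and> length w = size M}"
    unfolding shuffle_words_def M_def by (auto dest: arg_cong[where f = set_mset] arg_cong[where f = size])
  moreover have "finite {w. set w \<subseteq> set_mset M \<and> length w = size M}"
    by (rule finite_lists_length_eq) simp
  ultimately show ?thesis by (rule finite_subset)
qed

lemma finite_norm_sum: "finite W \<Longrightarrow> finite (norm_sum W f)"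
  unfolding norm_sum_def by auto

lemma finite_ecomp: "finite (ecomp s ts)"
  unfolding ecomp_def Let_def by (auto intro: finite_norm_sum finite_shuffle_words)

lemma norm_sum_singleton: "norm_sum {w} f = (if nondeg (f w) then {f w} else {})"
proof -
  have "{w' \<in> {w}. f w' = f w} = {w}" by auto
  then show ?thesis by (auto simp: norm_sum_def)
qed

lemma arity_simplex_of: "simplex_of r s \<Longrightarrow> arity s = r"
  by (cases s) (auto simp: simplex_of_def is_perm_def arity_def dest: distinct_card)

context
  fixes Agr :: "int \<Rightarrow> 'a::ab_group_add set" and d :: "'a \<Rightarrow> 'a"
    and \<theta> :: "simplex \<Rightarrow> 'a list \<Rightarrow> 'a"
  assumes alg: "E_algebra Agr d \<theta>"
begin

lemma E_algebra_char2: "\<forall>x::'a. x + x = 0"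
  using alg unfolding E_algebra_def by (elim conjE)

lemma E_algebra_equivariant:
  "is_perm r \<sigma> \<Longrightarrow> simplex_of r s \<Longrightarrow> nondeg s \<Longrightarrow> length as = r \<Longrightarrow>
     \<theta> (map (pmult \<sigma>) s) as = \<theta> s (map (\<lambda>p. as ! p) \<sigma>)"
  using alg unfolding E_algebra_def by blast

lemma E_algebra_ecomp:
  "simplex_of (length ts) s \<Longrightarrow> nondeg s \<Longrightarrow> \<forall>t\<in>set ts. simplex_of (arity t) t \<and> nondeg t \<Longrightarrow>
     length as = sum_list (map arity ts) \<Longrightarrow>
     act \<theta> (ecomp s ts) as =
       \<theta> s (map (\<lambda>i. \<theta> (ts ! i) (take (arity (ts ! i)) (drop (sum_list (map arity (take i ts))) as)))
              [0..<length ts])"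
  using alg unfolding E_algebra_def by blast

lemma act_ecomp_binary:
  assumes "simplex_of 2 s" "nondeg s" "simplex_of 2 t" "nondeg t" "simplex_of 2 u" "nondeg u"
  shows "act \<theta> (ecomp s [t, u]) [a, b, c, e] = \<theta> s [\<theta> t [a, b], \<theta> u [c, e]]"
  using assms by (subst E_algebra_ecomp) (auto simp: arity_simplex_of numeral_eq_Suc)

lemma act_csum:
  "\<forall>c\<in>set cs. finite c \<Longrightarrow> act \<theta> (csum cs) as = (\<Sum>c\<leftarrow>cs. act \<theta> c as)"
  unfolding act_def using sum_csum E_algebra_char2 by blast

end

lemma length_xt [simp]: "length (xt i) = Suc i"
  by (simp add: xt_def)

lemma nth_xt: "k \<le> i \<Longrightarrow> xt i ! k = (if even k then [0, 1] else [1, 0])"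
  by (simp add: xt_def nth_append del: upt_Suc)

lemma set_xt: "set (xt i) \<subseteq> {[0, 1], [1, 0]}"
  by (auto simp: xt_def)

lemma is_perm_2: "is_perm 2 [0, 1]" "is_perm 2 [1, 0]"
  by (auto simp: is_perm_def)

lemma nondeg_drop_xt: "nondeg (drop j (xt i))"
  unfolding nondeg_def distinct_adj_conv_nth by (simp add: nth_xt)

lemma nondeg_xt: "nondeg (xt i)"
  using nondeg_drop_xt[of 0] by simp

lemma simplex_of_drop_xt: "j \<le> i \<Longrightarrow> simplex_of 2 (drop j (xt i))"
  using set_xt[of i] set_drop_subset[of j "xt i"] is_perm_2 by (auto simp: simplex_of_def)

lemma simplex_of_xt: "simplex_of 2 (xt i)"
  using simplex_of_drop_xt[of 0] by simp

lemma take_xt: "j \<le> i \<Longrightarrow> take (Suc j) (xt i) = xt j"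
  by (rule nth_equalityI) (auto simp: nth_xt)

lemma drop_xt:
  "j \<le> i \<Longrightarrow> drop j (xt i) = map (pmult (if even j then [0, 1] else [1, 0])) (xt (i - j))"
  by (rule nth_equalityI) (auto simp: nth_xt pmult_def)

lemma cup_drop_xt_diagonal:
  assumes "E_algebra Agr d \<theta>" "j \<le> i"
  shows "\<theta> (drop j (xt i)) [b, b] = cup \<theta> (i - j) b b"
proof -
  let ?\<tau> = "if even j then [0, 1] else [1, 0::nat]"
  have "is_perm 2 ?\<tau>" using is_perm_2 by simp
  then have "\<theta> (drop j (xt i)) [b, b] = \<theta> (xt (i - j)) (map (\<lambda>p. [b, b] ! p) ?\<tau>)"
    using assms E_algebra_equivariant[OF assms(1) _ simplex_of_xt nondeg_xt] by (simp add: drop_xt)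
  then show ?thesis by (simp add: cup_def)
qed

definition block_xt :: "nat \<Rightarrow> simplex" where
  "block_xt i = map (\<lambda>k. if even k then [0, 1, 2, 3] else [2, 3, 0, 1]) [0..<Suc i]"

lemma nondeg_block_xt: "nondeg (block_xt i)"
  unfolding nondeg_def distinct_adj_conv_nth by (simp add: block_xt_def nth_append del: upt_Suc)

lemma simplex_of_block_xt: "simplex_of 4 (block_xt i)"
proof -
  have "is_perm 4 [0, 1, 2, 3]" "is_perm 4 [2, 3, 0, 1]"
    by (auto simp: is_perm_def lessThan_nat_numeral)
  then show ?thesis unfolding simplex_of_def block_xt_def by (auto simp del: upt_Suc)
qed

lemma shuffle_words_vertex: "shuffle_words [n, 0, 0] = {replicate n 0}"
proof -
  have "mset w = mset (replicate n 0) \<longleftrightarrow> w = replicate n (0::nat)" for w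
  proof
    assume w: "mset w = mset (replicate n 0)"
    then have "length w = n" by (metis mset_eq_length length_replicate)
    moreover have "set w \<subseteq> {0}"
      using w by (metis mset_eq_setD set_replicate_conv_if empty_subsetI order_refl)
    ultimately show "w = replicate n 0"
      by (metis replicate_length_same singletonD subsetD)
  qed simp
  then show ?thesis by (auto simp: shuffle_words_def numeral_eq_Suc)
qed

lemma count_list_replicate: "count_list (replicate n x) y = (if x = y then n else 0)"
  by (induction n) auto

lemma F_map_xt: "F_map (xt i) = {block_xt i}"
proof -
  let ?xs = "[xt i, xt 0, xt 0]" and ?w = "replicate i (0::nat)"
  have vertex: "vertex_at ?xs ?w k = [if even k then [0, 1] else [1, 0], [0, 1], [0, 1]]" if "k \<le> i" for k
    using that by (simp add: vertex_at_def count_list_replicate nth_xt min_def numeral_eq_Suc upt_rec)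
  have "map (\<lambda>k. pcomp (hd (vertex_at ?xs ?w k)) (tl (vertex_at ?xs ?w k))) [0..<length ?w + 1]
        = block_xt i"
    by (rule nth_equalityI) (auto simp: block_xt_def vertex pcomp_def simp del: upt_Suc)
  moreover have "map sdim ?xs = [i, 0, 0]" by (simp add: sdim_def)
  ultimately show ?thesis
    unfolding F_map_def ecomp_def Let_def
    using nondeg_xt nondeg_block_xt by (simp add: shuffle_words_vertex norm_sum_singleton del: upt_Suc)
qed

lemma act_F_map_xt:
  assumes "E_algebra Agr d \<theta>"
  shows "act \<theta> (lact [0, 2, 1, 3] (F_map (xt i))) [\<alpha>, \<alpha>, \<beta>, \<beta>]
           = cup \<theta> i (cup \<theta> 0 \<alpha> \<beta>) (cup \<theta> 0 \<alpha> \<beta>)"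
proof -
  have "is_perm 4 [0, 2, 1, 3]" by (auto simp: is_perm_def lessThan_nat_numeral)
  then have "act \<theta> (lact [0, 2, 1, 3] (F_map (xt i))) [\<alpha>, \<alpha>, \<beta>, \<beta>] = \<theta> (block_xt i) [\<alpha>, \<beta>, \<alpha>, \<beta>]"
    using E_algebra_equivariant[OF assms _ simplex_of_block_xt nondeg_block_xt]
    by (simp add: F_map_xt lact_def act_def)
  also have "\<dots> = act \<theta> (ecomp (xt i) [xt 0, xt 0]) [\<alpha>, \<beta>, \<alpha>, \<beta>]"
    using F_map_xt[of i] by (simp add: F_map_def act_def)
  also have "\<dots> = cup \<theta> i (cup \<theta> 0 \<alpha> \<beta>) (cup \<theta> 0 \<alpha> \<beta>)"
    using act_ecomp_binary[OF assms] by (simp add: simplex_of_xt nondeg_xt cup_def)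
  finally show ?thesis .
qed

lemma act_G_map_xt:
  assumes "E_algebra Agr d \<theta>"
  shows "act \<theta> (G_map (xt i)) [\<alpha>, \<alpha>, \<beta>, \<beta>]
           = (\<Sum>j\<le>i. cup \<theta> 0 (cup \<theta> j \<alpha> \<alpha>) (cup \<theta> (i - j) \<beta> \<beta>))"
proof -
  have AW_term: "act \<theta> (ecomp (xt 0) [take (Suc j) (xt i), drop j (xt i)]) [\<alpha>, \<alpha>, \<beta>, \<beta>]
      = cup \<theta> 0 (cup \<theta> j \<alpha> \<alpha>) (cup \<theta> (i - j) \<beta> \<beta>)" if "j \<le> i" for j
    using that act_ecomp_binary[OF assms] cup_drop_xt_diagonal[OF assms that]
    by (simp add: take_xt simplex_of_xt nondeg_xt simplex_of_drop_xt nondeg_drop_xt cup_def)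
  have "act \<theta> (G_map (xt i)) [\<alpha>, \<alpha>, \<beta>, \<beta>]
      = (\<Sum>j\<leftarrow>[0..<Suc i]. act \<theta> (ecomp (xt 0) [take (Suc j) (xt i), drop j (xt i)]) [\<alpha>, \<alpha>, \<beta>, \<beta>])"
    unfolding G_map_def by (simp add: act_csum[OF assms] finite_ecomp map_map o_def del: upt_Suc)
  also have "\<dots> = (\<Sum>j\<leftarrow>[0..<Suc i]. cup \<theta> 0 (cup \<theta> j \<alpha> \<alpha>) (cup \<theta> (i - j) \<beta> \<beta>))"
    by (rule arg_cong[where f = sum_list], rule map_cong) (simp_all add: AW_term del: upt_Suc)
  also have "\<dots> = (\<Sum>j\<le>i. cup \<theta> 0 (cup \<theta> j \<alpha> \<alpha>) (cup \<theta> (i - j) \<beta> \<beta>))"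
    by (simp add: sum_set_upt_conv_sum_list_nat[symmetric] atLeast0LessThan lessThan_Suc_atMost
        del: upt_Suc)
  finally show ?thesis .
qed

theorem mainTheorem1:
  fixes Agr :: "int \<Rightarrow> 'a::ab_group_add set" and d :: "'a \<Rightarrow> 'a"
    and \<theta> :: "simplex \<Rightarrow> 'a list \<Rightarrow> 'a" and \<alpha> \<beta> :: 'a and i :: nat
  assumes "E_algebra Agr d \<theta>"
  shows "act \<theta> (lact [0, 2, 1, 3] (F_map (xt i))) [\<alpha>, \<alpha>, \<beta>, \<beta>]
           = cup \<theta> i (cup \<theta> 0 \<alpha> \<beta>) (cup \<theta> 0 \<alpha> \<beta>)
       \<and> act \<theta> (G_map (xt i)) [\<alpha>, \<alpha>, \<beta>, \<beta>]
           = (\<Sum>j\<le>i. cup \<theta> 0 (cup \<theta> j \<alpha> \<alpha>) (cup \<theta> (i - j) \<beta> \<beta>))"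
  using act_F_map_xt[OF assms] act_G_map_xt[OF assms] by blast

end
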